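(* Every absorbing hierarchical generator $\mathcal{H}$ is linearly independent (as a set of functions on $\mathbb{R}^d$).
   Context: Fix integers $d\ge1$, $n\ge2$, $m\ge2$; $s=n-1$, $p=m-1$. B-splines $\varphi^\ell_{\vec i}(\vec x)=\prod_kQ(n^\ell x_k-i_k)$ on $\mathbb{R}^d$ for $\ell\ge0$, $\vec i\in\mathbb{Z}^d$, $Q$ the uniform B-spline of order $m$ with knots $0,\dots,m$; $\mathfrak{B}$ the set of all of them; $\mathcal{B}^0=\{\varphi^0_{\vec i}:\vec i\in[-p:0]^d\}$. Children $\mathrm{ch}(\varphi^\ell_{\vec i})=\{\varphi^{\ell+1}_{\vec k}:n\vec i\le\vec k\le n\vec i+sm\}$, extended to sets by union. Cells $I^\ell_{\vec i}=\prod_k[i_kn^{-\ell},(i_k+1)n^{-\ell})$; cell support $\mathbb{I}(\varphi^\ell_{\vec i})=\{I^\ell_{\vec k}:\vec i\le\vec k\le\vec i+p\}$ (componentwise), extended to sets by union. A lineage is a finite $\mathcal{L}\subset\mathfrak{B}$ with $\mathcal{L}\subset\mathcal{B}^0\cup\mathrm{ch}(\mathcal{L})$; its hierarchical generator is $\mathcal{H}=(\mathcal{B}^0\cup\mathrm{ch}(\mathcal{L}))\setminus\mathcal{L}$. $\mathcal{H}$ is absorbing if there is no $\varphi\in\mathcal{H}$ with $\mathbb{I}(\varphi)\subset\mathbb{I}(\mathcal{L})$. *)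

theory Defs
  imports "HOL-Analysis.Analysis"
begin

text \<open>Uniform (cardinal) B-spline of order m with knots 0,...,m, via the
Cox--de Boor recursion: order 1 is the indicator of [0,1).\<close>
fun cardB :: "nat \<Rightarrow> real \<Rightarrow> real" where
  "cardB 0 x = 0"
| "cardB (Suc 0) x = (if 0 \<le> x \<and> x < 1 then 1 else 0)"
| "cardB (Suc (Suc k)) x =
     (x * cardB (Suc k) x + (real (k + 2) - x) * cardB (Suc k) (x - 1)) / real (k + 1)"

definition bspl :: "nat \<Rightarrow> nat \<Rightarrow> nat \<Rightarrow> int ^ 'd \<Rightarrow> (real ^ 'd \<Rightarrow> real)" where
  "bspl n m l i = (\<lambda>x. \<Prod>k\<in>UNIV. cardB m (real n ^ l * x $ k - of_int (i $ k)))"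

definition vle :: "int ^ 'd \<Rightarrow> int ^ 'd \<Rightarrow> bool" where
  "vle a b \<longleftrightarrow> (\<forall>k. a $ k \<le> b $ k)"

definition allB :: "nat \<Rightarrow> nat \<Rightarrow> (real ^ 'd \<Rightarrow> real) set" where
  "allB n m = {bspl n m l i | l i. True}"

definition B0 :: "nat \<Rightarrow> nat \<Rightarrow> (real ^ 'd \<Rightarrow> real) set" where
  "B0 n m = {bspl n m 0 i | i. vle (\<chi> k. - int (m - 1)) i \<and> vle i (\<chi> k. 0)}"

definition ch :: "nat \<Rightarrow> nat \<Rightarrow> (real ^ 'd \<Rightarrow> real) \<Rightarrow> (real ^ 'd \<Rightarrow> real) set" where
  "ch n m phi = {bspl n m (Suc l) k | l i k. phi = bspl n m l i \<and>
      vle (\<chi> j. int n * i $ j) k \<and> vle k (\<chi> j. int n * i $ j + int ((n - 1) * m))}"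

definition chS :: "nat \<Rightarrow> nat \<Rightarrow> (real ^ 'd \<Rightarrow> real) set \<Rightarrow> (real ^ 'd \<Rightarrow> real) set" where
  "chS n m S = (\<Union>phi\<in>S. ch n m phi)"

definition cell :: "nat \<Rightarrow> nat \<Rightarrow> int ^ 'd \<Rightarrow> (real ^ 'd) set" where
  "cell n l i = {x. \<forall>k. of_int (i $ k) / real n ^ l \<le> x $ k \<and> x $ k < (of_int (i $ k) + 1) / real n ^ l}"

definition cellsupp :: "nat \<Rightarrow> nat \<Rightarrow> (real ^ 'd \<Rightarrow> real) \<Rightarrow> (real ^ 'd) set set" where
  "cellsupp n m phi = {cell n l k | l i k. phi = bspl n m l i \<and>
      vle i k \<and> vle k (\<chi> j. i $ j + int (m - 1))}"

definition cellsuppS :: "nat \<Rightarrow> nat \<Rightarrow> (real ^ 'd \<Rightarrow> real) set \<Rightarrow> (real ^ 'd) set set" where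
  "cellsuppS n m S = (\<Union>phi\<in>S. cellsupp n m phi)"

definition lineage :: "nat \<Rightarrow> nat \<Rightarrow> (real ^ 'd \<Rightarrow> real) set \<Rightarrow> bool" where
  "lineage n m L \<longleftrightarrow> finite L \<and> L \<subseteq> allB n m \<and> L \<subseteq> B0 n m \<union> chS n m L"

definition hgen :: "nat \<Rightarrow> nat \<Rightarrow> (real ^ 'd \<Rightarrow> real) set \<Rightarrow> (real ^ 'd \<Rightarrow> real) set" where
  "hgen n m L = (B0 n m \<union> chS n m L) - L"

definition absorbing :: "nat \<Rightarrow> nat \<Rightarrow> (real ^ 'd \<Rightarrow> real) set \<Rightarrow> bool" where
  "absorbing n m L \<longleftrightarrow> \<not> (\<exists>phi\<in>hgen n m L. cellsupp n m phi \<subseteq> cellsuppS n m L)"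

definition lin_indep_fun :: "('a \<Rightarrow> real) set \<Rightarrow> bool" where
  "lin_indep_fun H \<longleftrightarrow> (\<forall>S c. finite S \<and> S \<subseteq> H \<and> (\<forall>x. (\<Sum>f\<in>S. c f * f x) = 0)
      \<longrightarrow> (\<forall>f\<in>S. c f = 0))"

end

theory Submission
  imports Defs "HOL-Computational_Algebra.Polynomial"
begin

text \<open>Suppose a finite combination of elements of the generator vanishes, and argue by induction
on the level, coarsest first. For a spline of level l in the combination, absorbency provides a cell
of level l in its support that lies outside the cell support of the lineage. Every generator of a
finer level is a child of a lineage element and thus, along the lineage, has its support inside the
support of a lineage spline of level l; so it vanishes on that cell. On the cell, the remaining splines
of level l are tensor products of the polynomial pieces of the cardinal B-spline, and these pieces are
linearly independent: differentiating a vanishing combination of the pieces of order k+1 yields one of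
order k, and the pieces form a partition of unity.\<close>

lemma pderiv_sum: "pderiv (sum f A) = (\<Sum>x\<in>A. pderiv (f x))"
  using higher_pderiv_sum[of 1] by simp

lemma poly_eq_0_if_infinite_roots:
  fixes p :: "'a::idom poly"
  assumes "infinite A" and "\<And>x. x \<in> A \<Longrightarrow> poly p x = 0"
  shows "p = 0"
  using assms poly_roots_finite[of p] finite_subset[of A "{x. poly p x = 0}"] by blast

fun bspline_piece :: "nat \<Rightarrow> int \<Rightarrow> real poly" where
  "bspline_piece 0 s = 0"
| "bspline_piece (Suc 0) s = (if s = 0 then 1 else 0)"
| "bspline_piece (Suc (Suc k)) s = smult (1 / real (k + 1))
     ([:of_int s, 1:] * bspline_piece (Suc k) s
      + [:real (k + 2) - of_int s, -1:] * bspline_piece (Suc k) (s - 1))"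

lemma bspline_piece_eq_0: "s < 0 \<or> int m \<le> s \<Longrightarrow> bspline_piece m s = 0"
  by (induction m s rule: bspline_piece.induct) auto

lemma cardB_eq_poly_piece:
  "0 \<le> y \<Longrightarrow> y < 1 \<Longrightarrow> cardB m (y + of_int s) = poly (bspline_piece m s) y"
proof (induction m s rule: bspline_piece.induct)
  case (3 k s)
  have shift: "y + of_int s - 1 = y + of_int (s - 1)" by simp
  show ?case
    using 3 by (simp only: cardB.simps bspline_piece.simps shift) (simp add: field_simps)
qed auto

lemma pderiv_bspline_piece:
  "pderiv (bspline_piece (Suc (Suc k)) s) = bspline_piece (Suc k) s - bspline_piece (Suc k) (s - 1)"
proof (induction k arbitrary: s)
  case 0
  show ?case by (simp add: pderiv_pCons pderiv_mult pderiv_smult pderiv_minus)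
next
  case (Suc k)
  show ?case
    apply (subst bspline_piece.simps(3))
    apply (simp only: pderiv_add pderiv_mult pderiv_smult Suc)
    apply (simp add: pderiv_pCons poly_eq_poly_eq_iff[symmetric] fun_eq_iff)
    apply (simp add: divide_simps)
    apply (simp add: algebra_simps)
    done
qed

lemma poly_bspline_piece_Suc_Suc:
  "poly (bspline_piece (Suc (Suc k)) s) y =
     ((y + of_int s) * poly (bspline_piece (Suc k) s) y
      + (real (k + 2) - of_int s - y) * poly (bspline_piece (Suc k) (s - 1)) y) / real (k + 1)"
  by (simp add: field_simps)

lemma sum_bspline_pieces: "(\<Sum>r<Suc k. bspline_piece (Suc k) (int r)) = 1"
proof (induction k)
  case 0
  show ?case by simp
next
  case (Suc k)
  let ?P = "\<lambda>r y. poly (bspline_piece (Suc k) r) y"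
  have "poly (\<Sum>r<Suc (Suc k). bspline_piece (Suc (Suc k)) (int r)) y = 1" for y
  proof -
    have left: "(\<Sum>r<Suc (Suc k). (y + of_int (int r)) * ?P (int r) y)
        = (\<Sum>r<Suc k. (y + of_int (int r)) * ?P (int r) y)"
      by (simp add: bspline_piece_eq_0)
    have right: "(\<Sum>r<Suc (Suc k). (real (k + 2) - of_int (int r) - y) * ?P (int r - 1) y)
        = (\<Sum>r<Suc k. (real (k + 1) - of_int (int r) - y) * ?P (int r) y)"
      by (subst sum.lessThan_Suc_shift) (simp add: bspline_piece_eq_0 algebra_simps)
    have "poly (\<Sum>r<Suc (Suc k). bspline_piece (Suc (Suc k)) (int r)) y
        = ((\<Sum>r<Suc (Suc k). (y + of_int (int r)) * ?P (int r) y)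
          + (\<Sum>r<Suc (Suc k). (real (k + 2) - of_int (int r) - y) * ?P (int r - 1) y)) / real (k + 1)"
      by (simp only: poly_sum poly_bspline_piece_Suc_Suc sum_divide_distrib[symmetric]
          sum.distrib[symmetric] add_divide_distrib[symmetric])
    also have "\<dots> = (\<Sum>r<Suc k. real (k + 1) * ?P (int r) y) / real (k + 1)"
      unfolding left right sum.distrib[symmetric] by (simp add: algebra_simps)
    also have "\<dots> = 1"
      using arg_cong[OF Suc, of "\<lambda>p. poly p y"] by (simp add: poly_sum flip: sum_distrib_left)
    finally show ?thesis .
  qed
  then show ?case by (simp add: poly_eq_poly_eq_iff[symmetric] fun_eq_iff)
qed

lemma pderiv_bspline_pieces_combination:
  "pderiv (\<Sum>r<Suc (Suc k). smult (c r) (bspline_piece (Suc (Suc k)) (int r)))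
    = (\<Sum>r<Suc k. smult (c r - c (Suc r)) (bspline_piece (Suc k) (int r)))"
proof -
  let ?P = "bspline_piece (Suc k)"
  have "pderiv (\<Sum>r<Suc (Suc k). smult (c r) (bspline_piece (Suc (Suc k)) (int r)))
      = (\<Sum>r<Suc (Suc k). smult (c r) (?P (int r))) - (\<Sum>r<Suc (Suc k). smult (c r) (?P (int r - 1)))"
    by (simp only: pderiv_sum pderiv_smult pderiv_bspline_piece smult_diff_right sum_subtractf)
  also have "(\<Sum>r<Suc (Suc k). smult (c r) (?P (int r))) = (\<Sum>r<Suc k. smult (c r) (?P (int r)))"
    by (simp add: bspline_piece_eq_0 del: bspline_piece.simps)
  also have "(\<Sum>r<Suc (Suc k). smult (c r) (?P (int r - 1))) = (\<Sum>r<Suc k. smult (c (Suc r)) (?P (int r)))"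
    by (subst sum.lessThan_Suc_shift) (simp add: bspline_piece_eq_0 del: bspline_piece.simps)
  finally show ?thesis
    by (simp add: smult_diff_left sum_subtractf del: bspline_piece.simps)
qed

lemma bspline_pieces_independent:
  assumes "(\<Sum>r<Suc k. smult (c r) (bspline_piece (Suc k) (int r))) = 0" and "r < Suc k"
  shows "c r = 0"
  using assms
proof (induction k arbitrary: c r)
  case 0
  then show ?case by simp
next
  case (Suc k)
  have "(\<Sum>r<Suc k. smult (c r - c (Suc r)) (bspline_piece (Suc k) (int r)))
      = pderiv (\<Sum>r<Suc (Suc k). smult (c r) (bspline_piece (Suc (Suc k)) (int r)))"
    by (rule pderiv_bspline_pieces_combination[symmetric])
  also have "\<dots> = 0"
    using Suc.prems(1) by (simp del: bspline_piece.simps)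
  finally have "(\<Sum>r<Suc k. smult (c r - c (Suc r)) (bspline_piece (Suc k) (int r))) = 0" .
  then have step: "c r = c (Suc r)" if "r < Suc k" for r
    using Suc.IH[of "\<lambda>r. c r - c (Suc r)" r] that by (simp del: bspline_piece.simps)
  have const: "c r = c 0" if "r < Suc (Suc k)" for r
    using that
  proof (induction r)
    case (Suc r)
    then have "c r = c 0" by simp
    moreover have "c r = c (Suc r)" using Suc.prems by (intro step) simp
    ultimately show ?case by simp
  qed simp
  have "(\<Sum>r<Suc (Suc k). smult (c r) (bspline_piece (Suc (Suc k)) (int r)))
      = (\<Sum>r<Suc (Suc k). [:c 0:] * bspline_piece (Suc (Suc k)) (int r))"
  proof (rule sum.cong)
    fix r assume "r \<in> {..<Suc (Suc k)}"
    then show "smult (c r) (bspline_piece (Suc (Suc k)) (int r)) = [:c 0:] * bspline_piece (Suc (Suc k)) (int r)"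
      using const[of r] by (simp del: bspline_piece.simps)
  qed simp
  also have "\<dots> = [:c 0:]"
    by (simp only: sum_distrib_left[symmetric] sum_bspline_pieces mult_1_right)
  finally have "c 0 = 0"
    using Suc.prems(1) by (simp del: bspline_piece.simps)
  then show ?case using const[OF Suc.prems(2)] by simp
qed

lemma bspline_pieces_independent_on_unit_interval:
  assumes R: "finite R"
    and vanish: "\<And>y. 0 < y \<Longrightarrow> y < 1 \<Longrightarrow> (\<Sum>r\<in>R. c r * poly (bspline_piece m r) y) = 0"
    and r: "r \<in> R" "0 \<le> r" "r < int m"
  shows "c r = 0"
proof -
  obtain k where m: "m = Suc k" using r by (cases m) auto
  define c' where "c' r' = (if int r' \<in> R then c (int r') else 0)" for r'
  have "(\<Sum>r\<in>R. smult (c r) (bspline_piece m r)) = 0"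
    by (rule poly_eq_0_if_infinite_roots[where A = "{0<..<1}"])
      (use vanish in \<open>simp_all add: poly_sum del: bspline_piece.simps\<close>)
  moreover have "(\<Sum>r\<in>R. smult (c r) (bspline_piece m r))
      = (\<Sum>r\<in>{0..<int m}. smult (if r \<in> R then c r else 0) (bspline_piece m r))"
    using R by (intro sum.mono_neutral_cong) (auto simp: bspline_piece_eq_0 simp del: bspline_piece.simps)
  moreover have "\<dots> = (\<Sum>r<m. smult (c' r) (bspline_piece m (int r)))"
    unfolding image_int_atLeastLessThan[of 0 m, simplified, symmetric]
    by (simp add: c'_def sum.reindex lessThan_atLeast0 del: bspline_piece.simps)
  ultimately have "c' (nat r) = 0"
    using bspline_pieces_independent[where k = k and c = c' and r = "nat r"] r m by simp
  then show ?thesis using r by (simp add: c'_def)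
qed

lemma tensor_bspline_pieces_slice_vanishes:
  fixes K :: "(int ^ 'd) set"
  assumes K: "finite K" and "j0 \<notin> J"
    and vanish: "\<And>t. \<forall>j. 0 < t $ j \<and> t $ j < 1 \<Longrightarrow>
           (\<Sum>\<kappa>\<in>K. e \<kappa> * (\<Prod>j\<in>insert j0 J. poly (bspline_piece m (\<kappa> $ j)) (t $ j))) = 0"
    and r: "r \<in> (\<lambda>\<kappa>. \<kappa> $ j0) ` K" "0 \<le> r" "r < int m"
    and t: "\<forall>j. 0 < t $ j \<and> t $ j < 1"
  shows "(\<Sum>\<kappa>\<in>{\<kappa>\<in>K. \<kappa> $ j0 = r}. e \<kappa> * (\<Prod>j\<in>J. poly (bspline_piece m (\<kappa> $ j)) (t $ j))) = 0"
proof -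
  let ?piece = "\<lambda>\<kappa> j y. poly (bspline_piece m (\<kappa> $ j)) y"
  define c where "c r = (\<Sum>\<kappa>\<in>{\<kappa>\<in>K. \<kappa> $ j0 = r}. e \<kappa> * (\<Prod>j\<in>J. ?piece \<kappa> j (t $ j)))" for r
  have "(\<Sum>r\<in>(\<lambda>\<kappa>. \<kappa> $ j0) ` K. c r * poly (bspline_piece m r) y) = 0" if "0 < y" "y < 1" for y
  proof -
    define t' where "t' = (\<chi> j. if j = j0 then y else t $ j)"
    have t': "\<forall>j. 0 < t' $ j \<and> t' $ j < 1"
      using t that by (simp add: t'_def)
    have "t' $ j0 = y" "\<And>\<kappa>. (\<Prod>j\<in>J. ?piece \<kappa> j (t' $ j)) = (\<Prod>j\<in>J. ?piece \<kappa> j (t $ j))"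
      using assms(2) by (auto simp: t'_def intro: prod.cong)
    then have "(\<Sum>\<kappa>\<in>K. e \<kappa> * (\<Prod>j\<in>insert j0 J. ?piece \<kappa> j (t' $ j)))
        = (\<Sum>\<kappa>\<in>K. ?piece \<kappa> j0 y * (e \<kappa> * (\<Prod>j\<in>J. ?piece \<kappa> j (t $ j))))"
      using assms(2) by (intro sum.cong) (simp_all del: bspline_piece.simps)
    then have "0 = (\<Sum>\<kappa>\<in>K. ?piece \<kappa> j0 y * (e \<kappa> * (\<Prod>j\<in>J. ?piece \<kappa> j (t $ j))))"
      using vanish[OF t'] by simp
    also have "\<dots> = (\<Sum>r\<in>(\<lambda>\<kappa>. \<kappa> $ j0) ` K.
        \<Sum>\<kappa>\<in>{\<kappa>\<in>K. \<kappa> $ j0 = r}. ?piece \<kappa> j0 y * (e \<kappa> * (\<Prod>j\<in>J. ?piece \<kappa> j (t $ j))))"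
      using K by (rule sum.image_gen)
    also have "\<dots> = (\<Sum>r\<in>(\<lambda>\<kappa>. \<kappa> $ j0) ` K. c r * poly (bspline_piece m r) y)"
      unfolding c_def sum_distrib_right by (intro sum.cong refl) (simp add: mult_ac del: bspline_piece.simps)
    finally show ?thesis by simp
  qed
  then have "c r = 0"
    using K r by (intro bspline_pieces_independent_on_unit_interval[where R = "(\<lambda>\<kappa>. \<kappa> $ j0) ` K" and c = c])
      simp_all
  then show ?thesis by (simp add: c_def)
qed

lemma tensor_bspline_pieces_independent:
  fixes K :: "(int ^ 'd) set" and J :: "'d set"
  assumes "finite K"
    and "\<And>t. \<forall>j. 0 < t $ j \<and> t $ j < 1 \<Longrightarrow>
           (\<Sum>\<kappa>\<in>K. e \<kappa> * (\<Prod>j\<in>J. poly (bspline_piece m (\<kappa> $ j)) (t $ j))) = 0"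
    and "\<iota> \<in> K" and "\<forall>\<kappa>\<in>K. \<forall>j. j \<notin> J \<longrightarrow> \<kappa> $ j = \<iota> $ j"
    and "\<forall>j\<in>J. 0 \<le> \<iota> $ j \<and> \<iota> $ j < int m"
  shows "e \<iota> = 0"
proof -
  have "finite J" by simp
  then show ?thesis
    using assms
  proof (induction J arbitrary: K rule: finite_induct)
    case empty
    have "\<kappa> = \<iota>" if "\<kappa> \<in> K" for \<kappa>
      using that empty.prems(4) by (simp add: vec_eq_iff)
    then have "K = {\<iota>}" using empty.prems(3) by blast
    then show ?case using empty.prems(2)[of "\<chi> j. 1 / 2"] by simp
  next
    case (insert j0 J)
    let ?K' = "{\<kappa>\<in>K. \<kappa> $ j0 = \<iota> $ j0}"
    show ?case
    proof (rule insert.IH)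
      show "finite ?K'" using insert.prems(1) by simp
      show "\<iota> \<in> ?K'" using insert.prems(3) by simp
      show "\<forall>\<kappa>\<in>?K'. \<forall>j. j \<notin> J \<longrightarrow> \<kappa> $ j = \<iota> $ j" using insert.prems(4) by auto
      show "\<forall>j\<in>J. 0 \<le> \<iota> $ j \<and> \<iota> $ j < int m" using insert.prems(5) by simp
      show "(\<Sum>\<kappa>\<in>?K'. e \<kappa> * (\<Prod>j\<in>J. poly (bspline_piece m (\<kappa> $ j)) (t $ j))) = 0"
        if "\<forall>j. 0 < t $ j \<and> t $ j < 1" for t
        using insert.hyps(2) insert.prems(1,2,3,5) that
        by (intro tensor_bspline_pieces_slice_vanishes) auto
    qed
  qed
qed

lemma cardB_eq_0_outside: "x < 0 \<or> real m \<le> x \<Longrightarrow> cardB m x = 0"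
  by (induction m x rule: cardB.induct) auto

lemma cardB_nonneg: "0 \<le> cardB m x"
proof (induction m x rule: cardB.induct)
  case (3 k x)
  show ?case
  proof (cases "x < 0 \<or> real (Suc (Suc k)) \<le> x")
    case True
    then show ?thesis by (simp only: cardB_eq_0_outside order_refl)
  next
    case False
    then show ?thesis using 3 by (simp add: divide_simps)
  qed
qed auto

lemma cardB_pos: "0 < x \<Longrightarrow> x < real m \<Longrightarrow> 0 < cardB m x"
proof (induction m x rule: cardB.induct)
  case (3 k x)
  have left: "0 \<le> x * cardB (Suc k) x" and right: "0 \<le> (real (k + 2) - x) * cardB (Suc k) (x - 1)"
    using 3 cardB_nonneg by simp_all
  show ?case
  proof (cases "x < real (Suc k)")
    case True
    then have "0 < x * cardB (Suc k) x" using 3 by simp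
    then show ?thesis using right by (simp add: divide_simps)
  next
    case False
    have "0 < cardB (Suc k) (x - 1)"
    proof (cases "0 < x - 1")
      case True
      then show ?thesis using 3 False by simp
    next
      case False
      then have "x = 1" "k = 0" using 3 \<open>\<not> x < real (Suc k)\<close> by auto
      then show ?thesis by simp
    qed
    then have "0 < (real (k + 2) - x) * cardB (Suc k) (x - 1)" using 3 by simp
    then show ?thesis using left by (simp add: divide_simps)
  qed
qed auto

text \<open>For order 1 this fails at 0, where the indicator of [0,1) is 1.\<close>
lemma cardB_ne_0_iff:
  assumes "2 \<le> m"
  shows "cardB m x \<noteq> 0 \<longleftrightarrow> 0 < x \<and> x < real m"
proof -
  obtain k where m: "m = Suc (Suc k)" using assms by (metis add_2_eq_Suc le_Suc_ex)
  have "cardB m x = 0" if "\<not> (0 < x \<and> x < real m)"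
  proof (cases "x = 0")
    case True
    then show ?thesis unfolding m by (simp add: cardB_eq_0_outside)
  next
    case False
    then show ?thesis using that by (intro cardB_eq_0_outside) auto
  qed
  then show ?thesis using cardB_pos[of x m] by fastforce
qed

definition spline_box :: "nat \<Rightarrow> nat \<Rightarrow> nat \<Rightarrow> int ^ 'd \<Rightarrow> (real ^ 'd) set" where
  "spline_box n m l i = box (\<chi> j. of_int (i $ j) / real n ^ l) (\<chi> j. (of_int (i $ j) + real m) / real n ^ l)"

lemma mem_spline_box:
  assumes "0 < n"
  shows "x \<in> spline_box n m l i \<longleftrightarrow>
    (\<forall>j. of_int (i $ j) < real n ^ l * x $ j \<and> real n ^ l * x $ j < of_int (i $ j) + real m)"
proof -
  have "0 < real n ^ l" using assms by simp
  then show ?thesis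
    by (simp add: spline_box_def mem_box_cart pos_less_divide_eq pos_divide_less_eq mult.commute)
qed

lemma spline_box_ne_empty:
  assumes "0 < n" and "0 < m"
  shows "spline_box n m l i \<noteq> {}"
proof -
  have "(\<chi> j. (of_int (i $ j) + 1 / 2) / real n ^ l) \<in> spline_box n m l i"
    using assms by (simp add: mem_spline_box)
  then show ?thesis by blast
qed

lemma bspl_ne_0_iff:
  assumes "0 < n" and "2 \<le> m"
  shows "bspl n m l i x \<noteq> 0 \<longleftrightarrow> x \<in> spline_box n m l i"
  using assms by (simp add: bspl_def cardB_ne_0_iff mem_spline_box algebra_simps)

lemma bspl_inj:
  fixes i i' :: "int ^ 'd"
  assumes "2 \<le> n" and "2 \<le> m" and eq: "bspl n m l i = bspl n m l' i'"
  shows "l = l' \<and> i = i'"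
proof -
  define N where "N = real n ^ l"
  define N' where "N' = real n ^ l'"
  have pos: "0 < N" "0 < N'" using assms(1) by (simp_all add: N_def N'_def)
  have "spline_box n m l i = {x. bspl n m l i x \<noteq> 0}" "spline_box n m l' i' = {x. bspl n m l' i' x \<noteq> 0}"
    using assms(1,2) by (simp_all add: bspl_ne_0_iff)
  then have "spline_box n m l i = spline_box n m l' i'" by (simp add: eq)
  moreover have "spline_box n m l i \<noteq> {}" using assms(1,2) by (intro spline_box_ne_empty) simp_all
  ultimately have "(\<chi> j. of_int (i $ j) / N) = (\<chi> j. of_int (i' $ j) / N')
      \<and> (\<chi> j. (of_int (i $ j) + real m) / N) = (\<chi> j. (of_int (i' $ j) + real m) / N')"
    unfolding spline_box_def eq_box N_def N'_def by blast
  then have corners: "of_int (i $ j) / N = of_int (i' $ j) / N'"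
      "(of_int (i $ j) + real m) / N = (of_int (i' $ j) + real m) / N'" for j
    by (simp_all add: vec_eq_iff)
  obtain j :: 'd where True by simp
  have "real m / N = real m / N'" using corners[of j] unfolding add_divide_distrib by linarith
  then have "N = N'" using assms(2) by simp
  then have "l = l'" using assms(1) by (simp add: N_def N'_def power_inject_exp)
  moreover have "i = i'" using corners(1) \<open>N = N'\<close> pos by (simp add: vec_eq_iff)
  ultimately show ?thesis by simp
qed

lemma spline_box_child:
  assumes "1 \<le> n"
    and lower: "vle (\<chi> j. int n * i $ j) k" and upper: "vle k (\<chi> j. int n * i $ j + int ((n - 1) * m))"
  shows "spline_box n m (Suc l) k \<subseteq> spline_box n m l i"
proof
  fix x assume "x \<in> spline_box n m (Suc l) k"
  then have x: "of_int (k $ j) < real n * (real n ^ l * x $ j)"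
      "real n * (real n ^ l * x $ j) < of_int (k $ j) + real m" for j
    using assms(1) by (simp_all add: mem_spline_box mult.assoc)
  have "int n * i $ j \<le> k $ j" "k $ j \<le> int n * i $ j + (int n - 1) * int m" for j
    using lower upper assms(1) by (simp_all add: vle_def of_nat_diff)
  then have "real_of_int (int n * i $ j) \<le> of_int (k $ j)"
      "real_of_int (k $ j) \<le> of_int (int n * i $ j + (int n - 1) * int m)" for j
    by (simp_all only: of_int_le_iff)
  then have "real n * of_int (i $ j) \<le> of_int (k $ j)"
      "of_int (k $ j) + real m \<le> real n * (of_int (i $ j) + real m)" for j
    by (simp_all add: algebra_simps)
  then have "real n * of_int (i $ j) < real n * (real n ^ l * x $ j)"
      "real n * (real n ^ l * x $ j) < real n * (of_int (i $ j) + real m)" for j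
    using x by (meson order_le_less_trans order_less_le_trans)+
  then show "x \<in> spline_box n m l i"
    using assms(1) by (simp add: mem_spline_box)
qed

lemma parent_spline_box:
  assumes "2 \<le> n" and "2 \<le> m" and "bspl n m (Suc q) b \<in> B0 n m \<union> chS n m L"
  shows "\<exists>a. bspl n m q a \<in> L \<and> spline_box n m (Suc q) b \<subseteq> spline_box n m q a"
proof -
  have "bspl n m (Suc q) b \<notin> B0 n m"
    using bspl_inj[OF assms(1,2)] unfolding B0_def by blast
  with assms(3) obtain \<psi> where "\<psi> \<in> L" "bspl n m (Suc q) b \<in> ch n m \<psi>"
    unfolding chS_def by blast
  then obtain q' a b' where "\<psi> \<in> L" "\<psi> = bspl n m q' a" and b': "bspl n m (Suc q) b = bspl n m (Suc q') b'"
    and "vle (\<chi> j. int n * a $ j) b'" "vle b' (\<chi> j. int n * a $ j + int ((n - 1) * m))"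
    unfolding ch_def by blast
  moreover have "q' = q" "b' = b" using bspl_inj[OF assms(1,2) b'] by simp_all
  ultimately show ?thesis
    using spline_box_child[of n a b m q] assms(1) by auto
qed

lemma lineage_ancestor_spline_box:
  assumes "2 \<le> n" and "2 \<le> m" and "lineage n m L"
  shows "bspl n m q a \<in> L \<Longrightarrow> l \<le> q \<Longrightarrow>
    \<exists>a0. bspl n m l a0 \<in> L \<and> spline_box n m q a \<subseteq> spline_box n m l a0"
proof (induction q arbitrary: a)
  case 0
  then show ?case by auto
next
  case (Suc q)
  show ?case
  proof (cases "l = Suc q")
    case True
    then show ?thesis using Suc.prems by auto
  next
    case False
    have "bspl n m (Suc q) a \<in> B0 n m \<union> chS n m L"
      using assms(3) Suc.prems(1) unfolding lineage_def by blast
    then obtain a' where "bspl n m q a' \<in> L" "spline_box n m (Suc q) a \<subseteq> spline_box n m q a'"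
      using parent_spline_box[OF assms(1,2)] by blast
    moreover have "l \<le> q" using False Suc.prems(2) by simp
    ultimately show ?thesis using Suc.IH by blast
  qed
qed

lemma hgen_ancestor_spline_box:
  assumes "2 \<le> n" and "2 \<le> m" and "lineage n m L"
    and "bspl n m p b \<in> hgen n m L" and "l < p"
  shows "\<exists>a0. bspl n m l a0 \<in> L \<and> spline_box n m p b \<subseteq> spline_box n m l a0"
proof -
  obtain q where p: "p = Suc q" and "l \<le> q" using assms(5) by (cases p) auto
  have "bspl n m (Suc q) b \<in> B0 n m \<union> chS n m L" using assms(4) p by (simp add: hgen_def)
  then obtain a where "bspl n m q a \<in> L" "spline_box n m p b \<subseteq> spline_box n m q a"
    using parent_spline_box[OF assms(1,2)] p by blast
  with lineage_ancestor_spline_box[OF assms(1-3)] \<open>l \<le> q\<close> show ?thesis by blast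
qed

text \<open>The open cell with index k at level l is the support box of order 1.\<close>
lemma cell_mem_cellsupp:
  assumes "0 < n" and "1 \<le> m" and "x \<in> spline_box n m l a" and "x \<in> spline_box n 1 l k"
  shows "cell n l k \<in> cellsupp n m (bspl n m l a)"
proof -
  have "of_int (a $ j) < real n ^ l * x $ j" "real n ^ l * x $ j < of_int (a $ j) + real m"
      "of_int (k $ j) < real n ^ l * x $ j" "real n ^ l * x $ j < of_int (k $ j) + 1" for j
    using assms(1,3,4) by (simp_all add: mem_spline_box)
  then have "of_int (a $ j) < of_int (k $ j) + (1::real)" "of_int (k $ j) < of_int (a $ j) + real m" for j
    by (meson less_trans)+
  then have ak: "a $ j < k $ j + 1" "k $ j < a $ j + int m" for j
    by (metis of_int_less_iff of_int_add of_int_1 of_int_of_nat_eq)+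
  have "a $ j \<le> k $ j \<and> k $ j \<le> a $ j + int (m - 1)" for j
    using ak[of j] assms(2) by (simp add: of_nat_diff)
  then have "vle a k" "vle k (\<chi> j. a $ j + int (m - 1))"
    by (simp_all add: vle_def)
  then show ?thesis unfolding cellsupp_def by blast
qed

lemma hgen_vanishes_on_free_cell:
  assumes "2 \<le> n" and "2 \<le> m" and "lineage n m L"
    and "bspl n m p b \<in> hgen n m L" and "l < p"
    and "cell n l k \<notin> cellsuppS n m L" and "x \<in> spline_box n 1 l k"
  shows "bspl n m p b x = 0"
proof (rule ccontr)
  assume "bspl n m p b x \<noteq> 0"
  then have "x \<in> spline_box n m p b" using assms(1,2) by (simp add: bspl_ne_0_iff)
  moreover obtain a0 where "bspl n m l a0 \<in> L" "spline_box n m p b \<subseteq> spline_box n m l a0"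
    using hgen_ancestor_spline_box[OF assms(1-5)] by blast
  ultimately have "cell n l k \<in> cellsupp n m (bspl n m l a0)"
    using assms(1,2,7) by (intro cell_mem_cellsupp) auto
  with \<open>bspl n m l a0 \<in> L\<close> have "cell n l k \<in> cellsuppS n m L"
    unfolding cellsuppS_def by blast
  with assms(6) show False ..
qed

lemma hgen_mem_bspl: "f \<in> hgen n m L \<Longrightarrow> \<exists>l i. f = bspl n m l i"
  unfolding hgen_def B0_def chS_def ch_def by blast

lemma bspl_at_cell_point:
  assumes "0 < n" and "\<forall>j. 0 \<le> t $ j \<and> t $ j < 1"
  shows "bspl n m l b (\<chi> j. (t $ j + of_int (k $ j)) / real n ^ l)
    = (\<Prod>j\<in>UNIV. poly (bspline_piece m (k $ j - b $ j)) (t $ j))"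
proof -
  have "bspl n m l b (\<chi> j. (t $ j + of_int (k $ j)) / real n ^ l)
      = (\<Prod>j\<in>UNIV. cardB m (t $ j + of_int (k $ j - b $ j)))"
    using assms(1) by (simp add: bspl_def add_diff_eq)
  also have "\<dots> = (\<Prod>j\<in>UNIV. poly (bspline_piece m (k $ j - b $ j)) (t $ j))"
    using assms(2) by (intro prod.cong refl cardB_eq_poly_piece) auto
  finally show ?thesis .
qed

lemma absorbing_free_cell:
  assumes n: "2 \<le> n" and m: "2 \<le> m" and "absorbing n m L" and "bspl n m l i \<in> hgen n m L"
  obtains k where "cell n l k \<notin> cellsuppS n m L" "vle i k" "vle k (\<chi> j. i $ j + int (m - 1))"
proof -
  obtain C where "C \<in> cellsupp n m (bspl n m l i)" "C \<notin> cellsuppS n m L"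
    using assms(3,4) unfolding absorbing_def by blast
  moreover from this(1) obtain l' i' k where "C = cell n l' k" "bspl n m l i = bspl n m l' i'"
    "vle i' k" "vle k (\<chi> j. i' $ j + int (m - 1))"
    unfolding cellsupp_def by blast
  ultimately show ?thesis using that bspl_inj[OF n m] by blast
qed

lemma inj_bspl_shift:
  fixes k :: "int ^ 'd"
  assumes "2 \<le> n" and "2 \<le> m"
  shows "inj (\<lambda>\<kappa>. bspl n m l (k - \<kappa>))"
proof (rule injI)
  fix \<kappa> \<kappa>' assume "bspl n m l (k - \<kappa>) = bspl n m l (k - \<kappa>')"
  then show "\<kappa> = \<kappa>'" using bspl_inj[OF assms] by fastforce
qed

text \<open>The splines of level l are indexed by the position \<open>\<kappa> = k - b\<close> of the cell k in the
support of \<open>bspl n m l b\<close>; on the cell they are then the tensor pieces with index \<open>\<kappa>\<close>.\<close>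
lemma hgen_combination_on_free_cell:
  fixes S :: "(real ^ 'd \<Rightarrow> real) set"
  assumes n: "2 \<le> n" and m: "2 \<le> m" and lin: "lineage n m L"
    and S: "finite S" "S \<subseteq> hgen n m L" and zero: "\<And>x. (\<Sum>f\<in>S. c f * f x) = 0"
    and lower: "\<And>p b. p < l \<Longrightarrow> bspl n m p b \<in> S \<Longrightarrow> c (bspl n m p b) = 0"
    and free: "cell n l k \<notin> cellsuppS n m L" and t: "\<forall>j. 0 < t $ j \<and> t $ j < 1"
  shows "(\<Sum>\<kappa>\<in>(\<lambda>\<kappa>. bspl n m l (k - \<kappa>)) -` S.
      c (bspl n m l (k - \<kappa>)) * (\<Prod>j\<in>UNIV. poly (bspline_piece m (\<kappa> $ j)) (t $ j))) = 0"
proof -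
  define \<phi> where "\<phi> \<kappa> = bspl n m l (k - \<kappa>)" for \<kappa>
  define x where "x = (\<chi> j. (t $ j + of_int (k $ j)) / real n ^ l)"
  have x: "x \<in> spline_box n 1 l k" using t n by (simp add: x_def mem_spline_box)
  have off_level: "c f * f x = 0" if f: "f \<in> S - \<phi> ` (\<phi> -` S)" for f
  proof -
    obtain p b where fb: "f = bspl n m p b" using f S(2) hgen_mem_bspl by blast
    have "p \<noteq> l" using f unfolding fb \<phi>_def by (auto intro: image_eqI[where x = "k - b"])
    then consider "p < l" | "l < p" by linarith
    then show ?thesis
    proof cases
      case 1
      then show ?thesis using lower f fb by simp
    next
      case 2
      then have "f x = 0" using hgen_vanishes_on_free_cell[OF n m lin _ _ free x] f fb S(2) by blast
      then show ?thesis by simp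
    qed
  qed
  have "0 = (\<Sum>f\<in>S. c f * f x)" by (rule zero[symmetric])
  also have "\<dots> = (\<Sum>f\<in>\<phi> ` (\<phi> -` S). c f * f x)"
    by (rule sum.mono_neutral_right) (use S(1) off_level in auto)
  also have "\<dots> = (\<Sum>\<kappa>\<in>\<phi> -` S. c (\<phi> \<kappa>) * \<phi> \<kappa> x)"
  proof (rule sum.reindex_cong)
    show "inj_on \<phi> (\<phi> -` S)" unfolding \<phi>_def[abs_def] using inj_bspl_shift[OF n m] by (rule inj_on_subset) simp
  qed simp_all
  also have "\<dots> = (\<Sum>\<kappa>\<in>\<phi> -` S. c (\<phi> \<kappa>) * (\<Prod>j\<in>UNIV. poly (bspline_piece m (\<kappa> $ j)) (t $ j)))"
    using n t by (simp add: \<phi>_def x_def bspl_at_cell_point less_imp_le del: bspline_piece.simps)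
  finally show ?thesis by (simp add: \<phi>_def[abs_def])
qed

lemma hgen_coefficient_eq_0:
  fixes S :: "(real ^ 'd \<Rightarrow> real) set"
  assumes n: "2 \<le> n" and m: "2 \<le> m" and lin: "lineage n m L" and ab: "absorbing n m L"
    and S: "finite S" "S \<subseteq> hgen n m L" and zero: "\<And>x. (\<Sum>f\<in>S. c f * f x) = 0"
    and lower: "\<And>p b. p < l \<Longrightarrow> bspl n m p b \<in> S \<Longrightarrow> c (bspl n m p b) = 0"
    and i: "bspl n m l i \<in> S"
  shows "c (bspl n m l i) = 0"
proof -
  obtain k where free: "cell n l k \<notin> cellsuppS n m L"
    and ik: "vle i k" "vle k (\<chi> j. i $ j + int (m - 1))"
    using absorbing_free_cell[OF n m ab] i S(2) by blast
  have "c (bspl n m l (k - (k - i))) = 0"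
  proof (rule tensor_bspline_pieces_independent[where J = UNIV and \<iota> = "k - i"
        and K = "(\<lambda>\<kappa>. bspl n m l (k - \<kappa>)) -` S" and e = "\<lambda>\<kappa>. c (bspl n m l (k - \<kappa>))"])
    show "finite ((\<lambda>\<kappa>. bspl n m l (k - \<kappa>)) -` S)"
      using S(1) inj_bspl_shift[OF n m] by (rule finite_vimageI)
    show "k - i \<in> (\<lambda>\<kappa>. bspl n m l (k - \<kappa>)) -` S" using i by simp
    show "\<forall>j\<in>UNIV. 0 \<le> (k - i) $ j \<and> (k - i) $ j < int m"
    proof
      fix j
      have "i $ j \<le> k $ j" "k $ j \<le> i $ j + int (m - 1)"
        using ik by (simp_all add: vle_def)
      then show "0 \<le> (k - i) $ j \<and> (k - i) $ j < int m" using m by (simp add: of_nat_diff)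
    qed
  qed (use hgen_combination_on_free_cell[OF n m lin S zero lower free] in simp_all)
  then show ?thesis by simp
qed

theorem lemma6p7:
  fixes n m :: nat and L :: "(real ^ 'd \<Rightarrow> real) set"
  assumes "n \<ge> 2" and "m \<ge> 2"
    and "lineage n m L"
    and "absorbing n m L"
  shows "lin_indep_fun (hgen n m L)"
  unfolding lin_indep_fun_def
proof (intro allI impI)
  fix S and c :: "(real ^ 'd \<Rightarrow> real) \<Rightarrow> real"
  assume "finite S \<and> S \<subseteq> hgen n m L \<and> (\<forall>x. (\<Sum>f\<in>S. c f * f x) = 0)"
  then have S: "finite S" "S \<subseteq> hgen n m L" and zero: "\<And>x. (\<Sum>f\<in>S. c f * f x) = 0" by auto
  have "c (bspl n m l i) = 0" if "bspl n m l i \<in> S" for l i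
    using that
  proof (induction l arbitrary: i rule: less_induct)
    case (less l)
    show ?case by (rule hgen_coefficient_eq_0[OF assms S zero]) (use less in auto)
  qed
  then show "\<forall>f\<in>S. c f = 0" using S(2) hgen_mem_bspl by blast
qed

end
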